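(* Let $\mathbb G$ be a special 2-group, $(n,\rho,\beta,c)$, $(n',\rho',\beta',c')$ admissible quadruples, and let $\xi,\bar\xi:\mathcal F(n,\rho,\beta,c)\to\mathcal F(n',\rho',\beta',c')$ be gauge trivial 1-intertwiners corresponding (as in the description of 1-intertwiners) to triples $(\mathbf R,\mathbf I,\mathsf S)$ and $(\bar{\mathbf R},\mathbf I,\bar{\mathsf S})$. Then 2-intertwiners $\xi\Rightarrow\bar\xi$ are in bijection with $n'\times n$ arrays $\mathsf T$ whose entry $\mathsf T_{i',i}$ is a complex $\bar R_{i'i}\times R_{i'i}$ matrix if $\bar R_{i'i},R_{i'i}\ne0$ and empty otherwise, satisfying $$\mathsf T_{i',i}\,\mathsf S_{i',i}(g)=\bar{\mathsf S}_{i',i}(g)\,\mathsf T_{\rho'(g)^{-1}(i'),\rho(g)^{-1}(i)}$$ for all $(i',i)\in\mathrm{Sup}(\mathbf R)\cap\mathrm{Sup}(\bar{\mathbf R})$ and all $g\in\pi_0(\mathbb G)$. Under this bijection the vertical composite of $\mathsf T:\xi\Rightarrow\bar\xi$ and $\bar{\mathsf T}:\bar\xi\Rightarrow\bar{\bar\xi}$ is the array with entries $(\bar{\mathsf T}\cdot\mathsf T)_{i',i}=\bar{\mathsf T}_{i',i}\mathsf T_{i',i}$.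
   Context: A special 2-group $\mathbb G$: skeletal monoidal groupoid, strictly invertible objects, $l,r$ identities; objects form $\pi_0(\mathbb G)$; $\pi_1(\mathbb G)=\mathrm{Aut}(e)$ a $\pi_0(\mathbb G)$-module via $g\cdot u=\gamma_g^{-1}(\delta_g(u))$, $\gamma_g(u)=u\otimes\mathrm{id}_g$, $\delta_g(u)=\mathrm{id}_g\otimes u$; canonical 3-cocycle $\alpha(g_1,g_2,g_3)=\gamma^{-1}_{g_1g_2g_3}(a_{g_1,g_2,g_3})$. $\mathbf{2Mat}_{\mathbb C}$: objects $n\ge0$; for $n,m\ge1$ a 1-morphism $n\to m$ is $(\mathbf R,s)$, $\mathbf R$ an $m\times n$ matrix over $\mathbb N$, $s=(s_i)$ a gauge with $s_i(\mathbf a)\in GL((\mathbf R\mathbf a)_i,\mathbb C)$ ($=1$ if $(\mathbf R\mathbf a)_i=0$), $s_i(\mathbf e_j)=\mathbf I_{R_{ij}}$; a 2-morphism $(\mathbf R,s)\Rightarrow(\mathbf R',s')$ is an $m\times n$ array with $(i,j)$ entry an $R'_{ij}\times R_{ij}$ complex matrix if $R_{ij},R'_{ij}\ne0$, empty otherwise; vertical composition entrywise product; composition $(\tilde{\mathbf R},\tilde s)\circ(\mathbf R,s)=(\tilde{\mathbf R}\mathbf R,\tilde s\ast s)$, $(\tilde s\ast s)_k(\mathbf a)=\tilde s_k(\mathbf R\mathbf a)\big(\bigoplus_{i}\mathbf I_{\tilde R_{ki}}\otimes s_i(\mathbf a)\big)\mathbf P(\tilde{\mathbf R}_k,\mathbf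 R,\mathbf a)\big(\bigoplus_j \tilde s_k(\mathbf R\mathbf e_j)^{-1}\otimes\mathbf I_{a_j}\big)$, $\mathbf P(\cdot)$ fixed permutation matrices (identities when $\tilde{\mathbf R}_k$ or $\mathbf a$ is a standard basis vector, $\mathbf R$ an identity, or $\mathbf R$ one column); horizontal composition $(\tilde{\mathsf T}\circ\mathsf T)_{kj}=\tilde s'_k(\mathbf R'\mathbf e_j)\big(\bigoplus_i\tilde{\mathsf T}_{ki}\otimes\mathsf T_{ij}\big)\tilde s_k(\mathbf R\mathbf e_j)^{-1}$; identities $(\mathbf I_n,\mathbf I)$, $\mathbf I$ trivial gauge. Representations and intertwiners: a 2-matrix representation is $(n,\mathbb F)$, $\mathbb F=(F,F_2,F_0):\mathbb G\to\mathsf{Equiv}_{\mathbf{2Mat}_{\mathbb C}}(n)$ monoidal; a 1-intertwiner $(f,\Phi)$ has $f:n\to n'$ and invertible $\Phi(A):F'(A)\circ f\Rightarrow f\circ F(A)$ natural and coherent; a 2-intertwiner $(f,\Phi)\Rightarrow(g,\Psi)$ is $\tau:f\Rightarrow g$ with $\Psi(A)\cdot(1_{F'(A)}\circ\tau)=(\tau\circ1_{F(A)})\cdot\Phi(A)$ for all objects $A$. Admissible quadruple $(n,\rho,\beta,c)$: $n\ge1$, $\rho:\pi_0(\mathbb G)\to S_n$, $\beta:\pi_1(\mathbb G)\to(\mathbb C^* )^n_\rho$ module homomorphism ($S_n$ acting by $(\sigma\cdot\boldsymbol\lambda)_i=\lambda_{\sigma^{-1}(i)}$) with $[\beta\circ\alpha]=0$,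 $c$ normalized 2-cochain with $\partial c=\beta\circ\alpha$. $\mathcal F(n,\rho,\beta,c)=(n,\mathbb F)$, $F(g)=(\mathbf P(\rho(g)),\mathbf I)$ with $\mathbf P(\sigma)_{ij}=\delta_{i,\sigma(j)}$, $F(\varphi)$ with only nonempty entries $\beta(\gamma_g^{-1}\varphi)_{\rho(g)(j)}$ at $(\rho(g)(j),j)$, $F_2(g_1,g_2)$ with entries $c(g_1,g_2)_{\rho(g_1g_2)(j)}$ at $(\rho(g_1g_2)(j),j)$, $F_0$ identity. A triple $(\mathbf R,s,\mathsf S)$ ($\mathbf R$ rank matrix, $s$ gauge, $\mathsf S_{i',i}:\pi_0(\mathbb G)\to GL(R_{i'i})$ for $(i',i)\in\mathrm{Sup}(\mathbf R)=\{R_{i'i}\ne0\}$) corresponds to the 1-intertwiner $((\mathbf R,s),\Phi)$ with $\Phi(g)_{i',\rho(g)^{-1}(i)}=\mathsf S_{i',i}(g)$; it is gauge trivial if $s=\mathbf I$. *)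

theory Defs
  imports "Jordan_Normal_Form.Matrix" "HOL-Algebra.Group"
begin

abbreviation pinv :: "(nat \<Rightarrow> nat) \<Rightarrow> nat \<Rightarrow> nat" where
  "pinv \<sigma> \<equiv> Hilbert_Choice.inv \<sigma>"

definition dsum :: "complex mat \<Rightarrow> complex mat \<Rightarrow> complex mat" where
  "dsum A B = four_block_mat A (0\<^sub>m (dim_row A) (dim_col B)) (0\<^sub>m (dim_row B) (dim_col A)) B"

definition dsum_list :: "complex mat list \<Rightarrow> complex mat" where
  "dsum_list xs = foldr dsum xs (0\<^sub>m 0 0)"

definition kron :: "complex mat \<Rightarrow> complex mat \<Rightarrow> complex mat" where
  "kron A B = mat (dim_row A * dim_row B) (dim_col A * dim_col B)
     (\<lambda>(i,j). A $$ (i div dim_row B, j div dim_col B) * B $$ (i mod dim_row B, j mod dim_col B))"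

definition minv :: "complex mat \<Rightarrow> complex mat" where
  "minv A = (SOME B. B \<in> carrier_mat (dim_col A) (dim_row A) \<and> A * B = 1\<^sub>m (dim_row A) \<and> B * A = 1\<^sub>m (dim_col A))"

definition GL_mat :: "nat \<Rightarrow> complex mat set" where
  "GL_mat k = {A \<in> carrier_mat k k. invertible_mat A}"

text \<open>A rank matrix of a 1-morphism n \<rightarrow> m is an m x n matrix over nat.
  A gauge s is represented by the function k a \<mapsto> s_k(a) (a a vector in N^n).
  A 2-morphism (R,s) \<Rightarrow> (R',s') is an m x n array of complex matrices whose
  (i,j) entry is an R'_ij x R_ij matrix; when R_ij or R'_ij is 0 this matrix
  is the (unique) empty matrix.\<close>

type_synonym gauge = "nat \<Rightarrow> nat vec \<Rightarrow> complex mat"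
type_synonym array2 = "complex mat mat"

definition triv_gauge :: "nat mat \<Rightarrow> gauge" where
  "triv_gauge R = (\<lambda>k a. 1\<^sub>m ((R *\<^sub>v a) $ k))"

definition two_mor :: "nat mat \<Rightarrow> nat mat \<Rightarrow> array2 set" where
  "two_mor R R' = {T. T \<in> carrier_mat (dim_row R) (dim_col R) \<and>
      dim_row R' = dim_row R \<and> dim_col R' = dim_col R \<and>
      (\<forall>i < dim_row R. \<forall>j < dim_col R. T $$ (i,j) \<in> carrier_mat (R' $$ (i,j)) (R $$ (i,j)))}"

definition vcomp :: "array2 \<Rightarrow> array2 \<Rightarrow> array2" where
  "vcomp T' T = mat (dim_row T) (dim_col T) (\<lambda>(i,j). T' $$ (i,j) * T $$ (i,j))"

definition hcomp :: "gauge \<Rightarrow> gauge \<Rightarrow> nat mat \<Rightarrow> nat mat \<Rightarrow> array2 \<Rightarrow> array2 \<Rightarrow> array2" where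
  "hcomp st st' R R' Tt T = mat (dim_row Tt) (dim_col T) (\<lambda>(k,j).
      st' k (col R' j) * dsum_list (map (\<lambda>i. kron (Tt $$ (k,i)) (T $$ (i,j))) [0..<dim_col Tt])
        * minv (st k (col R j)))"

definition id2 :: "nat mat \<Rightarrow> array2" where
  "id2 R = mat (dim_row R) (dim_col R) (\<lambda>(i,j). 1\<^sub>m (R $$ (i,j)))"

definition perm_mat :: "nat \<Rightarrow> (nat \<Rightarrow> nat) \<Rightarrow> nat mat" where
  "perm_mat n \<sigma> = mat n n (\<lambda>(i,j). if i = \<sigma> j then 1 else 0)"

text \<open>G = pi_0, M = pi_1 (abelian, written multiplicatively), act g u = g . u,
  alpha the canonical (normalized) 3-cocycle.\<close>
definition special_2group_data ::
  "('g,'x) monoid_scheme \<Rightarrow> ('u,'y) monoid_scheme \<Rightarrow> ('g \<Rightarrow> 'u \<Rightarrow> 'u) \<Rightarrow> ('g \<Rightarrow> 'g \<Rightarrow> 'g \<Rightarrow> 'u) \<Rightarrow> bool" where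
  "special_2group_data G M act \<alpha> \<longleftrightarrow> group G \<and> comm_group M \<and>
     (\<forall>g\<in>carrier G. act g \<in> hom M M \<and> bij_betw (act g) (carrier M) (carrier M)) \<and>
     (\<forall>u\<in>carrier M. act \<one>\<^bsub>G\<^esub> u = u) \<and>
     (\<forall>g\<in>carrier G. \<forall>h\<in>carrier G. \<forall>u\<in>carrier M. act (g \<otimes>\<^bsub>G\<^esub> h) u = act g (act h u)) \<and>
     (\<forall>g1\<in>carrier G. \<forall>g2\<in>carrier G. \<forall>g3\<in>carrier G. \<alpha> g1 g2 g3 \<in> carrier M) \<and>
     (\<forall>g\<in>carrier G. \<forall>h\<in>carrier G.
        \<alpha> \<one>\<^bsub>G\<^esub> g h = \<one>\<^bsub>M\<^esub> \<and> \<alpha> g \<one>\<^bsub>G\<^esub> h = \<one>\<^bsub>M\<^esub> \<and> \<alpha> g h \<one>\<^bsub>G\<^esub> = \<one>\<^bsub>M\<^esub>) \<and>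
     (\<forall>g1\<in>carrier G. \<forall>g2\<in>carrier G. \<forall>g3\<in>carrier G. \<forall>g4\<in>carrier G.
        act g1 (\<alpha> g2 g3 g4) \<otimes>\<^bsub>M\<^esub> \<alpha> g1 (g2 \<otimes>\<^bsub>G\<^esub> g3) g4 \<otimes>\<^bsub>M\<^esub> \<alpha> g1 g2 g3
        = \<alpha> (g1 \<otimes>\<^bsub>G\<^esub> g2) g3 g4 \<otimes>\<^bsub>M\<^esub> \<alpha> g1 g2 (g3 \<otimes>\<^bsub>G\<^esub> g4))"

text \<open>rho : pi_0 \<rightarrow> S_n, permutations of {0..<n}; a vector of (C^*)^n is a function
  nat \<Rightarrow> complex, only its values at i < n matter; (sigma . lambda)_i = lambda_{sigma^-1 i}.\<close>
definition perm_rep :: "('g,'x) monoid_scheme \<Rightarrow> nat \<Rightarrow> ('g \<Rightarrow> nat \<Rightarrow> nat) \<Rightarrow> bool" where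
  "perm_rep G n \<rho> \<longleftrightarrow> (\<forall>g\<in>carrier G. \<rho> g permutes {..<n}) \<and>
     (\<forall>g\<in>carrier G. \<forall>h\<in>carrier G. \<rho> (g \<otimes>\<^bsub>G\<^esub> h) = \<rho> g \<circ> \<rho> h)"

definition admissible ::
  "('g,'x) monoid_scheme \<Rightarrow> ('u,'y) monoid_scheme \<Rightarrow> ('g \<Rightarrow> 'u \<Rightarrow> 'u) \<Rightarrow> ('g \<Rightarrow> 'g \<Rightarrow> 'g \<Rightarrow> 'u)
   \<Rightarrow> nat \<Rightarrow> ('g \<Rightarrow> nat \<Rightarrow> nat) \<Rightarrow> ('u \<Rightarrow> nat \<Rightarrow> complex) \<Rightarrow> ('g \<Rightarrow> 'g \<Rightarrow> nat \<Rightarrow> complex) \<Rightarrow> bool" where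
  "admissible G M act \<alpha> n \<rho> \<beta> c \<longleftrightarrow> n \<ge> 1 \<and> perm_rep G n \<rho> \<and>
     (\<forall>u\<in>carrier M. \<forall>i<n. \<beta> u i \<noteq> 0) \<and>
     (\<forall>u\<in>carrier M. \<forall>v\<in>carrier M. \<forall>i<n. \<beta> (u \<otimes>\<^bsub>M\<^esub> v) i = \<beta> u i * \<beta> v i) \<and>
     (\<forall>g\<in>carrier G. \<forall>u\<in>carrier M. \<forall>i<n. \<beta> (act g u) i = \<beta> u (pinv (\<rho> g) i)) \<and>
     (\<forall>g\<in>carrier G. \<forall>h\<in>carrier G. \<forall>i<n. c g h i \<noteq> 0) \<and>
     (\<forall>g\<in>carrier G. \<forall>i<n. c \<one>\<^bsub>G\<^esub> g i = 1 \<and> c g \<one>\<^bsub>G\<^esub> i = 1) \<and>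
     (\<forall>g1\<in>carrier G. \<forall>g2\<in>carrier G. \<forall>g3\<in>carrier G. \<forall>i<n.
        c g2 g3 (pinv (\<rho> g1) i) * c g1 (g2 \<otimes>\<^bsub>G\<^esub> g3) i / (c (g1 \<otimes>\<^bsub>G\<^esub> g2) g3 i * c g1 g2 i)
        = \<beta> (\<alpha> g1 g2 g3) i)"

text \<open>F(g) = (P(rho g), I) on objects.\<close>
definition Fobj :: "nat \<Rightarrow> ('g \<Rightarrow> nat \<Rightarrow> nat) \<Rightarrow> 'g \<Rightarrow> nat mat" where
  "Fobj n \<rho> g = perm_mat n (\<rho> g)"

text \<open>Phi(g) : F'(g) o (R,I) \<Rightarrow> (R,I) o F(g), with Phi(g)_{i', rho(g)^-1 i} = S_{i',i}(g);
  entries outside the support are empty.\<close>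
definition Phi_of :: "nat \<Rightarrow> nat \<Rightarrow> ('g \<Rightarrow> nat \<Rightarrow> nat) \<Rightarrow> nat mat \<Rightarrow> (nat \<Rightarrow> nat \<Rightarrow> 'g \<Rightarrow> complex mat) \<Rightarrow> 'g \<Rightarrow> array2" where
  "Phi_of n n' \<rho> R S g = mat n' n (\<lambda>(i',j).
     (let i = \<rho> g j in if R $$ (i',i) \<noteq> 0 then S i' i g else 0\<^sub>m (R $$ (i',i)) (R $$ (i',i))))"

text \<open>The triple (R, I, S) describes a gauge trivial 1-intertwiner
  F(n,rho,...) \<rightarrow> F(n',rho',...): R is an n' x n rank matrix, S_{i',i}(g) \<in> GL(R_{i'i})
  on Sup(R), and Phi(g) is an (invertible) 2-morphism F'(g) o (R,I) \<Rightarrow> (R,I) o F(g).\<close>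
definition triple_intertwiner ::
  "('g,'x) monoid_scheme \<Rightarrow> nat \<Rightarrow> nat \<Rightarrow> ('g \<Rightarrow> nat \<Rightarrow> nat) \<Rightarrow> ('g \<Rightarrow> nat \<Rightarrow> nat)
   \<Rightarrow> nat mat \<Rightarrow> (nat \<Rightarrow> nat \<Rightarrow> 'g \<Rightarrow> complex mat) \<Rightarrow> bool" where
  "triple_intertwiner G n n' \<rho> \<rho>' R S \<longleftrightarrow> R \<in> carrier_mat n' n \<and>
     (\<forall>i'<n'. \<forall>i<n. R $$ (i',i) \<noteq> 0 \<longrightarrow> (\<forall>g\<in>carrier G. S i' i g \<in> GL_mat (R $$ (i',i)))) \<and>
     (\<forall>g\<in>carrier G. Phi_of n n' \<rho> R S g \<in> two_mor (Fobj n' \<rho>' g * R) (R * Fobj n \<rho> g))"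

definition two_intertwiners ::
  "('g,'x) monoid_scheme \<Rightarrow> nat \<Rightarrow> nat \<Rightarrow> ('g \<Rightarrow> nat \<Rightarrow> nat) \<Rightarrow> ('g \<Rightarrow> nat \<Rightarrow> nat)
   \<Rightarrow> nat mat \<Rightarrow> (nat \<Rightarrow> nat \<Rightarrow> 'g \<Rightarrow> complex mat)
   \<Rightarrow> nat mat \<Rightarrow> (nat \<Rightarrow> nat \<Rightarrow> 'g \<Rightarrow> complex mat) \<Rightarrow> array2 set" where
  "two_intertwiners G n n' \<rho> \<rho>' R S Rb Sb =
     {\<tau> \<in> two_mor R Rb. \<forall>g\<in>carrier G.
        vcomp (Phi_of n n' \<rho> Rb Sb g)
              (hcomp (triv_gauge (Fobj n' \<rho>' g)) (triv_gauge (Fobj n' \<rho>' g)) R Rb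
                     (id2 (Fobj n' \<rho>' g)) \<tau>)
      = vcomp (hcomp (triv_gauge R) (triv_gauge Rb) (Fobj n \<rho> g) (Fobj n \<rho> g)
                     \<tau> (id2 (Fobj n \<rho> g)))
              (Phi_of n n' \<rho> R S g)}"

end

theory Submission
  imports Defs
begin

text \<open>With trivial gauges, whiskering an array \<open>\<tau>\<close> by the identity 2-morphism of a
  permutation 1-morphism \<open>P(\<sigma>)\<close> only permutes its entries: on the left the rows are
  reindexed by \<open>\<sigma>\<^sup>-\<^sup>1\<close>, on the right the columns by \<open>\<sigma>\<close>. The coherence square of a
  2-intertwiner at \<open>g\<close> therefore compares, entry by entry, \<open>\<Psi>(g) \<tau>\<^bsub>\<rho>'(g)\<^sup>-\<^sup>1 i', \<rho>(g)\<^sup>-\<^sup>1 i\<^esub>\<close>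
  with \<open>\<tau>\<^bsub>i',i\<^esub> \<Phi>(g)\<close>. On the common support of the two rank matrices this is the stated
  condition; off it both sides are empty matrices, because the rank matrix of a
  1-intertwiner is invariant under \<open>(\<rho>'(g), \<rho>(g))\<close>. Vertical composition is entrywise,
  and the conditions compose by associativity.\<close>

lemma empty_mat_eq:
  "A \<in> carrier_mat a b \<Longrightarrow> B \<in> carrier_mat a b \<Longrightarrow> a = 0 \<or> b = 0 \<Longrightarrow> A = B"
  by (rule eq_matI) auto

lemma mult_empty_inner_mat:
  "A \<in> carrier_mat a 0 \<Longrightarrow> B \<in> carrier_mat 0 b \<Longrightarrow> A * B = (0\<^sub>m a b :: 'a :: semiring_0 mat)"
  by (rule eq_matI) (auto simp: scalar_prod_def)

lemma minv_one_mat: "minv (1\<^sub>m k) = 1\<^sub>m k"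
  unfolding minv_def by (rule some_equality) auto

lemma dsum_empty_left: "dsum (0\<^sub>m 0 0) B = B"
  unfolding dsum_def four_block_mat_def Let_def by (rule eq_matI) auto

lemma dsum_empty_right: "dsum A (0\<^sub>m 0 0) = A"
  unfolding dsum_def four_block_mat_def Let_def by (rule eq_matI) auto

lemma kron_empty_left: "A \<in> carrier_mat 0 0 \<Longrightarrow> kron A B = 0\<^sub>m 0 0"
  unfolding kron_def by (rule eq_matI) auto

lemma kron_empty_right: "B \<in> carrier_mat 0 0 \<Longrightarrow> kron A B = 0\<^sub>m 0 0"
  unfolding kron_def by (rule eq_matI) auto

lemma kron_one_mat_1_left: "kron (1\<^sub>m 1) B = B"
  unfolding kron_def by (rule eq_matI) auto

lemma kron_one_mat_1_right: "kron A (1\<^sub>m 1) = A"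
  unfolding kron_def by (rule eq_matI) auto

lemma foldr_dsum_empty: "\<forall>x\<in>set xs. x = 0\<^sub>m 0 0 \<Longrightarrow> foldr dsum xs X = X"
  by (induction xs) (auto simp: dsum_empty_left)

lemma dsum_list_map_upt_single:
  assumes "i0 < m" and "\<And>i. i < m \<Longrightarrow> i \<noteq> i0 \<Longrightarrow> f i = 0\<^sub>m 0 0"
  shows "dsum_list (map f [0..<m]) = f i0"
proof -
  have split: "[0..<m] = [0..<i0] @ i0 # [Suc i0..<m]"
    using assms(1) upt_add_eq_append[of 0 i0 "m - i0"] upt_conv_Cons[of i0 m] by simp
  have "\<forall>x\<in>set (map f [0..<i0]). x = 0\<^sub>m 0 0" "\<forall>x\<in>set (map f [Suc i0..<m]). x = 0\<^sub>m 0 0"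
    using assms by auto
  then show ?thesis
    unfolding dsum_list_def split by (simp add: foldr_dsum_empty dsum_empty_right)
qed

lemma mat_eq_mat_iff: "mat nr nc f = mat nr nc h \<longleftrightarrow> (\<forall>i<nr. \<forall>j<nc. f (i,j) = h (i,j))"
  by (metis cong_mat index_mat)

lemma permutes_lessThan_inv:
  assumes "\<sigma> permutes {..<n}"
  shows "k < n \<Longrightarrow> pinv \<sigma> k < n" and "j < n \<Longrightarrow> \<sigma> j < n"
    and "\<sigma> (pinv \<sigma> k) = k" and "pinv \<sigma> (\<sigma> j) = j"
  using permutes_inverses[OF assms] permutes_in_image[OF assms]
    permutes_in_image[OF permutes_inv[OF assms]] by auto

lemma all_lessThan_permutes_reindex:
  assumes "\<sigma> permutes {..<n}"
  shows "(\<forall>j<n. P j) \<longleftrightarrow> (\<forall>i<n. P (pinv \<sigma> i))"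
  by (metis permutes_lessThan_inv[OF assms])

lemma perm_mat_index:
  "k < n \<Longrightarrow> j < n \<Longrightarrow> perm_mat n \<sigma> $$ (k,j) = (if k = \<sigma> j then 1 else 0)"
  unfolding perm_mat_def by simp

lemma perm_mat_carrier [simp]: "perm_mat n \<sigma> \<in> carrier_mat n n"
  unfolding perm_mat_def by simp

lemma perm_mat_dims [simp]: "dim_row (perm_mat n \<sigma>) = n" "dim_col (perm_mat n \<sigma>) = n"
  unfolding perm_mat_def by simp_all

lemma perm_mat_mult_index:
  assumes "\<sigma> permutes {..<n'}" "R \<in> carrier_mat n' n" "k < n'" "j < n"
  shows "(perm_mat n' \<sigma> * R) $$ (k,j) = R $$ (pinv \<sigma> k, j)"
proof -
  have "(perm_mat n' \<sigma> * R) $$ (k,j) = (\<Sum>i<n'. (if k = \<sigma> i then 1 else 0) * R $$ (i,j))"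
    using assms by (simp add: scalar_prod_def perm_mat_index atLeast0LessThan)
  also have "\<dots> = (\<Sum>i<n'. if i = pinv \<sigma> k then R $$ (i,j) else 0)"
    by (rule sum.cong) (use permutes_lessThan_inv[OF assms(1)] in auto)
  finally show ?thesis
    using permutes_lessThan_inv(1)[OF assms(1,3)] by simp
qed

lemma mult_perm_mat_index:
  assumes "\<sigma> permutes {..<n}" "R \<in> carrier_mat n' n" "k < n'" "j < n"
  shows "(R * perm_mat n \<sigma>) $$ (k,j) = R $$ (k, \<sigma> j)"
proof -
  have "(R * perm_mat n \<sigma>) $$ (k,j) = (\<Sum>i<n. R $$ (k,i) * (if i = \<sigma> j then 1 else 0))"
    using assms by (simp add: scalar_prod_def perm_mat_index atLeast0LessThan)
  also have "\<dots> = (\<Sum>i<n. if i = \<sigma> j then R $$ (k,i) else 0)"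
    by (rule sum.cong) auto
  finally show ?thesis
    using permutes_lessThan_inv(2)[OF assms(1,4)] by simp
qed

lemma id2_perm_mat_index:
  "k < n \<Longrightarrow> j < n \<Longrightarrow> id2 (perm_mat n \<sigma>) $$ (k,j) = 1\<^sub>m (if k = \<sigma> j then 1 else 0)"
  unfolding id2_def by (simp add: perm_mat_index)

lemma mult_mat_vec_col_index:
  "i < dim_row A \<Longrightarrow> j < dim_col B \<Longrightarrow> (A *\<^sub>v col B j) $ i = (A * B) $$ (i,j)"
  by simp

lemma two_morD:
  assumes "T \<in> two_mor R Rb" and "R \<in> carrier_mat n' n"
  shows "T \<in> carrier_mat n' n" and "Rb \<in> carrier_mat n' n"
    and "\<And>i j. i < n' \<Longrightarrow> j < n \<Longrightarrow> T $$ (i,j) \<in> carrier_mat (Rb $$ (i,j)) (R $$ (i,j))"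
  using assms unfolding two_mor_def by auto

lemma hcomp_triv_gauge_index:
  assumes "k < dim_row Tt" "j < dim_col T"
    and "dsum_list (map (\<lambda>i. kron (Tt $$ (k,i)) (T $$ (i,j))) [0..<dim_col Tt])
           \<in> carrier_mat ((Rt' *\<^sub>v col R' j) $ k) ((Rt *\<^sub>v col R j) $ k)"
  shows "hcomp (triv_gauge Rt) (triv_gauge Rt') R R' Tt T $$ (k,j)
           = dsum_list (map (\<lambda>i. kron (Tt $$ (k,i)) (T $$ (i,j))) [0..<dim_col Tt])"
  using assms unfolding hcomp_def triv_gauge_def by (simp add: minv_one_mat)

lemma hcomp_id2_perm_mat_left:
  assumes "\<sigma> permutes {..<n'}" "R \<in> carrier_mat n' n" "\<tau> \<in> two_mor R Rb"
  shows "hcomp (triv_gauge (perm_mat n' \<sigma>)) (triv_gauge (perm_mat n' \<sigma>)) R Rb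
           (id2 (perm_mat n' \<sigma>)) \<tau> = mat n' n (\<lambda>(k,j). \<tau> $$ (pinv \<sigma> k, j))"
proof (rule eq_matI)
  note \<tau> = two_morD[OF assms(3,2)]
  fix k j
  assume "k < dim_row (mat n' n (\<lambda>(k,j). \<tau> $$ (pinv \<sigma> k, j)))"
    and "j < dim_col (mat n' n (\<lambda>(k,j). \<tau> $$ (pinv \<sigma> k, j)))"
  then have k: "k < n'" and j: "j < n" by auto
  have k0: "pinv \<sigma> k < n'"
    using permutes_lessThan_inv(1)[OF assms(1) k] .
  have "dsum_list (map (\<lambda>i. kron (id2 (perm_mat n' \<sigma>) $$ (k,i)) (\<tau> $$ (i,j))) [0..<n'])
      = kron (id2 (perm_mat n' \<sigma>) $$ (k, pinv \<sigma> k)) (\<tau> $$ (pinv \<sigma> k, j))"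
    by (rule dsum_list_map_upt_single[OF k0])
      (use k permutes_lessThan_inv[OF assms(1)] in \<open>auto simp: id2_perm_mat_index kron_empty_left\<close>)
  also have "\<dots> = \<tau> $$ (pinv \<sigma> k, j)"
    using k k0 permutes_lessThan_inv[OF assms(1)] kron_one_mat_1_left by (simp add: id2_perm_mat_index)
  finally have dsum: "dsum_list (map (\<lambda>i. kron (id2 (perm_mat n' \<sigma>) $$ (k,i)) (\<tau> $$ (i,j))) [0..<n'])
      = \<tau> $$ (pinv \<sigma> k, j)" .
  have "(perm_mat n' \<sigma> *\<^sub>v col Rb j) $ k = Rb $$ (pinv \<sigma> k, j)"
    "(perm_mat n' \<sigma> *\<^sub>v col R j) $ k = R $$ (pinv \<sigma> k, j)"
    using perm_mat_mult_index[OF assms(1) _ k j] \<tau>(2) assms(2) k j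
    by (simp_all only: mult_mat_vec_col_index carrier_matD perm_mat_dims)
  then show "hcomp (triv_gauge (perm_mat n' \<sigma>)) (triv_gauge (perm_mat n' \<sigma>)) R Rb
      (id2 (perm_mat n' \<sigma>)) \<tau> $$ (k,j) = mat n' n (\<lambda>(k,j). \<tau> $$ (pinv \<sigma> k, j)) $$ (k,j)"
    using hcomp_triv_gauge_index \<tau>(1) \<tau>(3)[OF k0 j] dsum k j by (simp add: id2_def)
qed (use two_morD[OF assms(3,2)] in \<open>simp_all add: hcomp_def id2_def\<close>)

lemma hcomp_id2_perm_mat_right:
  assumes "\<sigma> permutes {..<n}" "R \<in> carrier_mat n' n" "\<tau> \<in> two_mor R Rb"
  shows "hcomp (triv_gauge R) (triv_gauge Rb) (perm_mat n \<sigma>) (perm_mat n \<sigma>)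
           \<tau> (id2 (perm_mat n \<sigma>)) = mat n' n (\<lambda>(k,j). \<tau> $$ (k, \<sigma> j))"
proof (rule eq_matI)
  note \<tau> = two_morD[OF assms(3,2)]
  fix k j
  assume "k < dim_row (mat n' n (\<lambda>(k,j). \<tau> $$ (k, \<sigma> j)))"
    and "j < dim_col (mat n' n (\<lambda>(k,j). \<tau> $$ (k, \<sigma> j)))"
  then have k: "k < n'" and j: "j < n" by auto
  have j0: "\<sigma> j < n"
    using permutes_lessThan_inv(2)[OF assms(1) j] .
  have "dsum_list (map (\<lambda>i. kron (\<tau> $$ (k,i)) (id2 (perm_mat n \<sigma>) $$ (i,j))) [0..<n])
      = kron (\<tau> $$ (k, \<sigma> j)) (id2 (perm_mat n \<sigma>) $$ (\<sigma> j, j))"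
    by (rule dsum_list_map_upt_single[OF j0])
      (use j in \<open>auto simp: id2_perm_mat_index kron_empty_right\<close>)
  also have "\<dots> = \<tau> $$ (k, \<sigma> j)"
    using j j0 kron_one_mat_1_right by (simp add: id2_perm_mat_index)
  finally have dsum: "dsum_list (map (\<lambda>i. kron (\<tau> $$ (k,i)) (id2 (perm_mat n \<sigma>) $$ (i,j))) [0..<n])
      = \<tau> $$ (k, \<sigma> j)" .
  have "(Rb *\<^sub>v col (perm_mat n \<sigma>) j) $ k = Rb $$ (k, \<sigma> j)"
    "(R *\<^sub>v col (perm_mat n \<sigma>) j) $ k = R $$ (k, \<sigma> j)"
    using mult_perm_mat_index[OF assms(1) _ k j] \<tau>(2) assms(2) k j
    by (simp_all only: mult_mat_vec_col_index carrier_matD perm_mat_dims)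
  then show "hcomp (triv_gauge R) (triv_gauge Rb) (perm_mat n \<sigma>) (perm_mat n \<sigma>)
      \<tau> (id2 (perm_mat n \<sigma>)) $$ (k,j) = mat n' n (\<lambda>(k,j). \<tau> $$ (k, \<sigma> j)) $$ (k,j)"
    using hcomp_triv_gauge_index \<tau>(1) \<tau>(3)[OF k j0] dsum k j by (simp add: id2_def)
qed (use two_morD[OF assms(3,2)] in \<open>simp_all add: hcomp_def id2_def\<close>)

lemma mult_intertwining_mat:
  fixes A A' B B' X Y Z :: "'a :: semiring_0 mat"
  assumes "A \<in> carrier_mat b a" "A' \<in> carrier_mat b a" "B \<in> carrier_mat c b" "B' \<in> carrier_mat c b"
    and "X \<in> carrier_mat a a" "Y \<in> carrier_mat b b" "Z \<in> carrier_mat c c"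
    and "A * X = Y * A'" "B * Y = Z * B'"
  shows "B * A * X = Z * (B' * A')"
proof -
  have "B * A * X = B * (A * X)"
    by (rule assoc_mult_mat[OF assms(3,1,5)])
  also have "\<dots> = B * Y * A'"
    unfolding assms(8) by (rule assoc_mult_mat[OF assms(3,6,2), symmetric])
  also have "\<dots> = Z * (B' * A')"
    unfolding assms(9) by (rule assoc_mult_mat[OF assms(7,4,2)])
  finally show ?thesis .
qed

lemma two_mor_vcomp:
  assumes "T \<in> two_mor R Rb" and "Tb \<in> two_mor Rb Rbb"
  shows "vcomp Tb T \<in> two_mor R Rbb"
proof -
  have "Tb $$ (i,j) * T $$ (i,j) \<in> carrier_mat (Rbb $$ (i,j)) (R $$ (i,j))"
    if "i < dim_row R" "j < dim_col R" for i j
  proof (rule mult_carrier_mat)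
    show "Tb $$ (i,j) \<in> carrier_mat (Rbb $$ (i,j)) (Rb $$ (i,j))"
      "T $$ (i,j) \<in> carrier_mat (Rb $$ (i,j)) (R $$ (i,j))"
      using assms that unfolding two_mor_def by auto
  qed
  then show ?thesis
    using assms unfolding two_mor_def vcomp_def by auto
qed

lemma vcomp_two_mor_eq:
  assumes "T \<in> two_mor R Rb" and "R \<in> carrier_mat n' n"
  shows "vcomp Tb T = mat n' n (\<lambda>(i',i). Tb $$ (i',i) * T $$ (i',i))"
  using two_morD(1)[OF assms] unfolding vcomp_def by simp

lemma triple_intertwinerD:
  assumes "triple_intertwiner G n n' \<rho> \<rho>' R S"
  shows "R \<in> carrier_mat n' n"
    and "\<And>k i g. k < n' \<Longrightarrow> i < n \<Longrightarrow> R $$ (k,i) \<noteq> 0 \<Longrightarrow> g \<in> carrier G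
           \<Longrightarrow> S k i g \<in> carrier_mat (R $$ (k,i)) (R $$ (k,i))"
    and "\<And>g. g \<in> carrier G \<Longrightarrow> Phi_of n n' \<rho> R S g \<in> two_mor (Fobj n' \<rho>' g * R) (R * Fobj n \<rho> g)"
  using assms unfolding triple_intertwiner_def GL_mat_def by auto

lemma Phi_of_dims [simp]: "dim_row (Phi_of n n' \<rho> R S g) = n'" "dim_col (Phi_of n n' \<rho> R S g) = n"
  unfolding Phi_of_def by simp_all

lemma Phi_of_index_permuted:
  assumes "\<rho> g permutes {..<n}" "k < n'" "i < n"
  shows "Phi_of n n' \<rho> R S g $$ (k, pinv (\<rho> g) i)
           = (if R $$ (k,i) \<noteq> 0 then S k i g else 0\<^sub>m (R $$ (k,i)) (R $$ (k,i)))"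
  using assms permutes_lessThan_inv[OF assms(1)] unfolding Phi_of_def by simp

definition equivariant_array ::
  "('g,'x) monoid_scheme \<Rightarrow> nat \<Rightarrow> nat \<Rightarrow> ('g \<Rightarrow> nat \<Rightarrow> nat) \<Rightarrow> ('g \<Rightarrow> nat \<Rightarrow> nat)
   \<Rightarrow> nat mat \<Rightarrow> (nat \<Rightarrow> nat \<Rightarrow> 'g \<Rightarrow> complex mat)
   \<Rightarrow> nat mat \<Rightarrow> (nat \<Rightarrow> nat \<Rightarrow> 'g \<Rightarrow> complex mat) \<Rightarrow> array2 \<Rightarrow> bool" where
  "equivariant_array G n n' \<rho> \<rho>' R S Rb Sb T \<longleftrightarrow>
     (\<forall>i'<n'. \<forall>i<n. R $$ (i',i) \<noteq> 0 \<longrightarrow> Rb $$ (i',i) \<noteq> 0 \<longrightarrow>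
        (\<forall>g\<in>carrier G. T $$ (i',i) * S i' i g = Sb i' i g * T $$ (pinv (\<rho>' g) i', pinv (\<rho> g) i)))"

locale perm_rep_pair =
  fixes G :: "('g,'x) monoid_scheme" and n n' :: nat and \<rho> \<rho>' :: "'g \<Rightarrow> nat \<Rightarrow> nat"
  assumes perm_rep_src: "perm_rep G n \<rho>" and perm_rep_tgt: "perm_rep G n' \<rho>'"
begin

lemma permutes_src: "g \<in> carrier G \<Longrightarrow> \<rho> g permutes {..<n}"
  using perm_rep_src unfolding perm_rep_def by blast

lemma permutes_tgt: "g \<in> carrier G \<Longrightarrow> \<rho>' g permutes {..<n'}"
  using perm_rep_tgt unfolding perm_rep_def by blast

lemma Phi_of_index_permuted_carrier:
  assumes "triple_intertwiner G n n' \<rho> \<rho>' R S" "g \<in> carrier G" "k < n'" "i < n"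
  shows "Phi_of n n' \<rho> R S g $$ (k, pinv (\<rho> g) i) \<in> carrier_mat (R $$ (k,i)) (R $$ (k,i))"
  using Phi_of_index_permuted[of \<rho> g n k n' i, OF permutes_src[OF assms(2)] assms(3,4)]
    triple_intertwinerD(2)[OF assms(1,3,4) _ assms(2)] by auto

text \<open>\<open>\<Phi>(g)\<close> has square blocks, while as a 2-morphism \<open>F'(g) \<circ> R \<Rightarrow> R \<circ> F(g)\<close> its
  blocks have the entries of \<open>R\<close> at two positions related by \<open>(\<rho>'(g), \<rho>(g))\<close> as sizes.\<close>
lemma triple_intertwiner_rank_invariant:
  assumes "triple_intertwiner G n n' \<rho> \<rho>' R S" "g \<in> carrier G" "k < n'" "i < n"
  shows "R $$ (pinv (\<rho>' g) k, pinv (\<rho> g) i) = R $$ (k,i)"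
proof -
  note R = triple_intertwinerD[OF assms(1)]
  note \<sigma> = permutes_src[OF assms(2)] and \<sigma>' = permutes_tgt[OF assms(2)]
  define j where "j = pinv (\<rho> g) i"
  have j: "j < n" and ij: "\<rho> g j = i"
    using permutes_lessThan_inv[OF \<sigma>] assms(4) unfolding j_def by auto
  have "Fobj n' \<rho>' g * R \<in> carrier_mat n' n"
    using R(1) unfolding Fobj_def by (auto intro: mult_carrier_mat)
  then have "Phi_of n n' \<rho> R S g $$ (k,j)
      \<in> carrier_mat ((R * Fobj n \<rho> g) $$ (k,j)) ((Fobj n' \<rho>' g * R) $$ (k,j))"
    using two_morD(3)[OF R(3)[OF assms(2)] _ assms(3) j] by blast
  moreover have "(R * Fobj n \<rho> g) $$ (k,j) = R $$ (k,i)"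
    using mult_perm_mat_index[OF \<sigma> R(1) assms(3) j] ij unfolding Fobj_def by simp
  moreover have "(Fobj n' \<rho>' g * R) $$ (k,j) = R $$ (pinv (\<rho>' g) k, j)"
    using perm_mat_mult_index[OF \<sigma>' R(1) assms(3) j] unfolding Fobj_def by simp
  ultimately show ?thesis
    using Phi_of_index_permuted_carrier[OF assms] unfolding j_def by auto
qed

lemma two_mor_index_permuted_carrier:
  assumes "triple_intertwiner G n n' \<rho> \<rho>' R S" "triple_intertwiner G n n' \<rho> \<rho>' Rb Sb"
    and "T \<in> two_mor R Rb" "g \<in> carrier G" "k < n'" "i < n"
  shows "T $$ (pinv (\<rho>' g) k, pinv (\<rho> g) i) \<in> carrier_mat (Rb $$ (k,i)) (R $$ (k,i))"
  using two_morD(3)[OF assms(3) triple_intertwinerD(1)[OF assms(1)]]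
    permutes_lessThan_inv(1)[OF permutes_tgt[OF assms(4)] assms(5)]
    permutes_lessThan_inv(1)[OF permutes_src[OF assms(4)] assms(6)]
    triple_intertwiner_rank_invariant[OF assms(1,4-6)]
    triple_intertwiner_rank_invariant[OF assms(2,4-6)]
  by metis

lemma coherence_square_entry_iff:
  assumes "triple_intertwiner G n n' \<rho> \<rho>' R S" "triple_intertwiner G n n' \<rho> \<rho>' Rb Sb"
    and "\<tau> \<in> two_mor R Rb" "g \<in> carrier G" "k < n'" "i < n"
  shows "Phi_of n n' \<rho> Rb Sb g $$ (k, pinv (\<rho> g) i) * \<tau> $$ (pinv (\<rho>' g) k, pinv (\<rho> g) i)
           = \<tau> $$ (k,i) * Phi_of n n' \<rho> R S g $$ (k, pinv (\<rho> g) i)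
         \<longleftrightarrow> (R $$ (k,i) \<noteq> 0 \<longrightarrow> Rb $$ (k,i) \<noteq> 0 \<longrightarrow>
               \<tau> $$ (k,i) * S k i g = Sb k i g * \<tau> $$ (pinv (\<rho>' g) k, pinv (\<rho> g) i))"
proof (cases "Rb $$ (k,i) = 0 \<or> R $$ (k,i) = 0")
  case True
  have "Phi_of n n' \<rho> Rb Sb g $$ (k, pinv (\<rho> g) i) * \<tau> $$ (pinv (\<rho>' g) k, pinv (\<rho> g) i)
          \<in> carrier_mat (Rb $$ (k,i)) (R $$ (k,i))"
    using Phi_of_index_permuted_carrier[OF assms(2,4-6)]
      two_mor_index_permuted_carrier[OF assms] by (rule mult_carrier_mat)
  moreover have "\<tau> $$ (k,i) * Phi_of n n' \<rho> R S g $$ (k, pinv (\<rho> g) i)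
          \<in> carrier_mat (Rb $$ (k,i)) (R $$ (k,i))"
    using two_morD(3)[OF assms(3) triple_intertwinerD(1)[OF assms(1)] assms(5,6)]
      Phi_of_index_permuted_carrier[OF assms(1,4-6)] by (rule mult_carrier_mat)
  ultimately have "Phi_of n n' \<rho> Rb Sb g $$ (k, pinv (\<rho> g) i) * \<tau> $$ (pinv (\<rho>' g) k, pinv (\<rho> g) i)
      = \<tau> $$ (k,i) * Phi_of n n' \<rho> R S g $$ (k, pinv (\<rho> g) i)"
    using True by (rule empty_mat_eq)
  then show ?thesis
    using True by auto
next
  case False
  then show ?thesis
    using Phi_of_index_permuted[of \<rho> g n k n' i, OF permutes_src[OF assms(4)] assms(5,6)] by auto
qed

lemma coherence_square_iff:
  assumes "triple_intertwiner G n n' \<rho> \<rho>' R S" "triple_intertwiner G n n' \<rho> \<rho>' Rb Sb"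
    and "\<tau> \<in> two_mor R Rb" "g \<in> carrier G"
  shows "vcomp (Phi_of n n' \<rho> Rb Sb g)
           (hcomp (triv_gauge (Fobj n' \<rho>' g)) (triv_gauge (Fobj n' \<rho>' g)) R Rb (id2 (Fobj n' \<rho>' g)) \<tau>)
         = vcomp (hcomp (triv_gauge R) (triv_gauge Rb) (Fobj n \<rho> g) (Fobj n \<rho> g) \<tau> (id2 (Fobj n \<rho> g)))
           (Phi_of n n' \<rho> R S g)
     \<longleftrightarrow> (\<forall>k<n'. \<forall>i<n. R $$ (k,i) \<noteq> 0 \<longrightarrow> Rb $$ (k,i) \<noteq> 0 \<longrightarrow>
           \<tau> $$ (k,i) * S k i g = Sb k i g * \<tau> $$ (pinv (\<rho>' g) k, pinv (\<rho> g) i))"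
  (is "?square \<longleftrightarrow> _")
proof -
  note \<sigma> = permutes_src[OF assms(4)] and \<sigma>' = permutes_tgt[OF assms(4)]
  note R = triple_intertwinerD(1)[OF assms(1)]
  have "?square \<longleftrightarrow> (\<forall>k<n'. \<forall>j<n. Phi_of n n' \<rho> Rb Sb g $$ (k,j) * \<tau> $$ (pinv (\<rho>' g) k, j)
                                   = \<tau> $$ (k, \<rho> g j) * Phi_of n n' \<rho> R S g $$ (k,j))"
    unfolding Fobj_def hcomp_id2_perm_mat_left[OF \<sigma>' R assms(3)]
      hcomp_id2_perm_mat_right[OF \<sigma> R assms(3)] vcomp_def by (simp add: mat_eq_mat_iff)
  also have "\<dots> \<longleftrightarrow> (\<forall>k<n'. \<forall>i<n.
      Phi_of n n' \<rho> Rb Sb g $$ (k, pinv (\<rho> g) i) * \<tau> $$ (pinv (\<rho>' g) k, pinv (\<rho> g) i)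
      = \<tau> $$ (k,i) * Phi_of n n' \<rho> R S g $$ (k, pinv (\<rho> g) i))"
    by (subst all_lessThan_permutes_reindex[OF \<sigma>]) (simp add: permutes_lessThan_inv(3)[OF \<sigma>])
  also have "\<dots> \<longleftrightarrow> (\<forall>k<n'. \<forall>i<n. R $$ (k,i) \<noteq> 0 \<longrightarrow> Rb $$ (k,i) \<noteq> 0 \<longrightarrow>
      \<tau> $$ (k,i) * S k i g = Sb k i g * \<tau> $$ (pinv (\<rho>' g) k, pinv (\<rho> g) i))"
    using coherence_square_entry_iff[OF assms] by simp
  finally show ?thesis .
qed

lemma two_intertwiners_eq:
  assumes "triple_intertwiner G n n' \<rho> \<rho>' R S" "triple_intertwiner G n n' \<rho> \<rho>' Rb Sb"
  shows "two_intertwiners G n n' \<rho> \<rho>' R S Rb Sb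
           = {T \<in> two_mor R Rb. equivariant_array G n n' \<rho> \<rho>' R S Rb Sb T}"
  unfolding two_intertwiners_def equivariant_array_def
  using coherence_square_iff[OF assms] by blast

lemma equivariant_array_vcomp:
  assumes "triple_intertwiner G n n' \<rho> \<rho>' R S" "triple_intertwiner G n n' \<rho> \<rho>' Rb Sb"
    and "triple_intertwiner G n n' \<rho> \<rho>' Rbb Sbb"
    and "T \<in> two_mor R Rb" "Tb \<in> two_mor Rb Rbb"
    and "equivariant_array G n n' \<rho> \<rho>' R S Rb Sb T"
    and "equivariant_array G n n' \<rho> \<rho>' Rb Sb Rbb Sbb Tb"
  shows "equivariant_array G n n' \<rho> \<rho>' R S Rbb Sbb (vcomp Tb T)"
  unfolding equivariant_array_def
proof (intro allI impI ballI)
  fix k i g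
  assume k: "k < n'" and i: "i < n" and "R $$ (k,i) \<noteq> 0" "Rbb $$ (k,i) \<noteq> 0" and g: "g \<in> carrier G"
  define k' i' where "k' = pinv (\<rho>' g) k" and "i' = pinv (\<rho> g) i"
  have "k' < n'" "i' < n"
    using permutes_lessThan_inv(1) permutes_src[OF g] permutes_tgt[OF g] k i
    unfolding k'_def i'_def by auto
  moreover have "vcomp Tb T = mat n' n (\<lambda>(i',i). Tb $$ (i',i) * T $$ (i',i))"
    using vcomp_two_mor_eq[OF assms(4) triple_intertwinerD(1)[OF assms(1)]] .
  moreover have carriers:
    "T $$ (k,i) \<in> carrier_mat (Rb $$ (k,i)) (R $$ (k,i))"
    "T $$ (k',i') \<in> carrier_mat (Rb $$ (k,i)) (R $$ (k,i))"
    "Tb $$ (k,i) \<in> carrier_mat (Rbb $$ (k,i)) (Rb $$ (k,i))"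
    "Tb $$ (k',i') \<in> carrier_mat (Rbb $$ (k,i)) (Rb $$ (k,i))"
    "S k i g \<in> carrier_mat (R $$ (k,i)) (R $$ (k,i))"
    "Sbb k i g \<in> carrier_mat (Rbb $$ (k,i)) (Rbb $$ (k,i))"
    using two_morD(3)[OF assms(4) triple_intertwinerD(1)[OF assms(1)] k i]
      two_morD(3)[OF assms(5) triple_intertwinerD(1)[OF assms(2)] k i]
      two_mor_index_permuted_carrier[OF assms(1,2,4) g k i]
      two_mor_index_permuted_carrier[OF assms(2,3,5) g k i]
      triple_intertwinerD(2)[OF assms(1) k i _ g] triple_intertwinerD(2)[OF assms(3) k i _ g]
      \<open>R $$ (k,i) \<noteq> 0\<close> \<open>Rbb $$ (k,i) \<noteq> 0\<close>
    unfolding k'_def i'_def by auto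
  have "Tb $$ (k,i) * T $$ (k,i) * S k i g = Sbb k i g * (Tb $$ (k',i') * T $$ (k',i'))"
  proof (cases "Rb $$ (k,i) = 0")
    case True
    then show ?thesis
      using carriers by (simp add: mult_empty_inner_mat)
  next
    case False
    show ?thesis
    proof (rule mult_intertwining_mat[OF carriers(1-5) _ carriers(6)])
      show "Sb k i g \<in> carrier_mat (Rb $$ (k,i)) (Rb $$ (k,i))"
        using triple_intertwinerD(2)[OF assms(2) k i False g] .
      show "T $$ (k,i) * S k i g = Sb k i g * T $$ (k',i')"
        "Tb $$ (k,i) * Sb k i g = Sbb k i g * Tb $$ (k',i')"
        using assms(6,7) k i False g \<open>R $$ (k,i) \<noteq> 0\<close> \<open>Rbb $$ (k,i) \<noteq> 0\<close>
        unfolding equivariant_array_def k'_def i'_def by blast+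
    qed
  qed
  ultimately show "vcomp Tb T $$ (k,i) * S k i g
      = Sbb k i g * vcomp Tb T $$ (pinv (\<rho>' g) k, pinv (\<rho> g) i)"
    using k i unfolding k'_def i'_def by simp
qed

end

theorem mainTheorem12:
  fixes G :: "('g,'x) monoid_scheme" and M :: "('u,'y) monoid_scheme"
    and act :: "'g \<Rightarrow> 'u \<Rightarrow> 'u" and \<alpha> :: "'g \<Rightarrow> 'g \<Rightarrow> 'g \<Rightarrow> 'u"
    and n n' :: nat and \<rho> \<rho>' :: "'g \<Rightarrow> nat \<Rightarrow> nat"
    and \<beta> \<beta>' :: "'u \<Rightarrow> nat \<Rightarrow> complex" and c c' :: "'g \<Rightarrow> 'g \<Rightarrow> nat \<Rightarrow> complex"
    and R Rb Rbb :: "nat mat" and S Sb Sbb :: "nat \<Rightarrow> nat \<Rightarrow> 'g \<Rightarrow> complex mat"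
  assumes "special_2group_data G M act \<alpha>"
    and "admissible G M act \<alpha> n \<rho> \<beta> c"
    and "admissible G M act \<alpha> n' \<rho>' \<beta>' c'"
    and "triple_intertwiner G n n' \<rho> \<rho>' R S"
    and "triple_intertwiner G n n' \<rho> \<rho>' Rb Sb"
    and "triple_intertwiner G n n' \<rho> \<rho>' Rbb Sbb"
  shows "two_intertwiners G n n' \<rho> \<rho>' R S Rb Sb =
           {T \<in> two_mor R Rb. \<forall>i'<n'. \<forall>i<n. R $$ (i',i) \<noteq> 0 \<longrightarrow> Rb $$ (i',i) \<noteq> 0 \<longrightarrow>
              (\<forall>g\<in>carrier G. T $$ (i',i) * S i' i g
                 = Sb i' i g * T $$ (pinv (\<rho>' g) i', pinv (\<rho> g) i))}
       \<and> (\<forall>T \<in> two_intertwiners G n n' \<rho> \<rho>' R S Rb Sb.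
           \<forall>Tb \<in> two_intertwiners G n n' \<rho> \<rho>' Rb Sb Rbb Sbb.
             vcomp Tb T \<in> two_intertwiners G n n' \<rho> \<rho>' R S Rbb Sbb
             \<and> vcomp Tb T = mat n' n (\<lambda>(i',i). Tb $$ (i',i) * T $$ (i',i)))"
proof -
  interpret perm_rep_pair G n n' \<rho> \<rho>'
    using assms(2,3) by unfold_locales (simp_all add: admissible_def)
  note intertwiners_eq = two_intertwiners_eq[OF assms(4,5)] two_intertwiners_eq[OF assms(5,6)]
    two_intertwiners_eq[OF assms(4,6)]
  have "vcomp Tb T \<in> two_intertwiners G n n' \<rho> \<rho>' R S Rbb Sbb
          \<and> vcomp Tb T = mat n' n (\<lambda>(i',i). Tb $$ (i',i) * T $$ (i',i))"
    if "T \<in> two_intertwiners G n n' \<rho> \<rho>' R S Rb Sb"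
      and "Tb \<in> two_intertwiners G n n' \<rho> \<rho>' Rb Sb Rbb Sbb" for T Tb
  proof
    have T: "T \<in> two_mor R Rb" "equivariant_array G n n' \<rho> \<rho>' R S Rb Sb T"
      and Tb: "Tb \<in> two_mor Rb Rbb" "equivariant_array G n n' \<rho> \<rho>' Rb Sb Rbb Sbb Tb"
      using that intertwiners_eq(1,2) by auto
    show "vcomp Tb T \<in> two_intertwiners G n n' \<rho> \<rho>' R S Rbb Sbb"
      using intertwiners_eq(3) two_mor_vcomp[OF T(1) Tb(1)]
        equivariant_array_vcomp[OF assms(4-6) T(1) Tb(1) T(2) Tb(2)] by blast
    show "vcomp Tb T = mat n' n (\<lambda>(i',i). Tb $$ (i',i) * T $$ (i',i))"
      using vcomp_two_mor_eq[OF T(1) triple_intertwinerD(1)[OF assms(4)]] .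
  qed
  then show ?thesis
    using intertwiners_eq(1) unfolding equivariant_array_def by blast
qed

end
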